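(* Let $m\ge 3$ and let $T_m$ be the graph defined below. The multiplicity of $1$ as an eigenvalue of $T_m$ equals the number of pairs $(j,\ell)\in\{0,\dots,m-1\}^2$ satisfying \[ \cos\tfrac{2\pi j}{m}+\cos\tfrac{2\pi \ell}{m}=2\cos\tfrac{2\pi j}{m}\cos\tfrac{2\pi \ell}{m}. \]
   Context: For $m\ge3$, $T_m$ is the cubic graph on $2m^2$ vertices $\{x^+_{i,j},\,x^-_{i,j}\mid i,j\in\mathbb{Z}_m\}$ with edges $\{x^+_{i,j},x^+_{i,j+1}\}$, $\{x^-_{i,j},x^-_{i,j+1}\}$ and $\{x^+_{i,j},x^-_{j,i}\}$ for all $i,j\in\mathbb{Z}_m$. Eigenvalues are those of the adjacency matrix. *)

theory Defs
  imports Complex_Main "Jordan_Normal_Form.Char_Poly"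
begin

text \<open>Vertices of T_m are encoded as natural numbers below 2*m*m:
  x^+_{i,j} is i*m+j and x^-_{i,j} is m*m+i*m+j (i, j < m).\<close>

definition Tp :: "nat \<Rightarrow> nat \<Rightarrow> nat \<Rightarrow> nat" where
  "Tp m i j = i * m + j"

definition Tn :: "nat \<Rightarrow> nat \<Rightarrow> nat \<Rightarrow> nat" where
  "Tn m i j = m * m + i * m + j"

definition T_edge :: "nat \<Rightarrow> nat \<Rightarrow> nat \<Rightarrow> bool" where
  "T_edge m u v \<longleftrightarrow> (\<exists>i<m. \<exists>j<m.
      (u = Tp m i j \<and> v = Tp m i ((j + 1) mod m)) \<or>
      (u = Tn m i j \<and> v = Tn m i ((j + 1) mod m)) \<or>
      (u = Tp m i j \<and> v = Tn m j i))"

definition T_adj :: "nat \<Rightarrow> nat \<Rightarrow> nat \<Rightarrow> bool" where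
  "T_adj m u v \<longleftrightarrow> T_edge m u v \<or> T_edge m v u"

definition T_adjacency_matrix :: "nat \<Rightarrow> real mat" where
  "T_adjacency_matrix m = mat (2 * m * m) (2 * m * m) (\<lambda>(u, v). if T_adj m u v then 1 else 0)"

definition eigenvalue_multiplicity :: "real mat \<Rightarrow> real \<Rightarrow> nat" where
  "eigenvalue_multiplicity A c = order c (char_poly A)"

end

theory Submission
  imports Defs
begin

(* Let omega = exp (2 pi i / m) and beta a = 2 cos (2 pi a / m), the eigenvalues of the m-cycle.
   For a, b < m and any root l of (l - beta a) (l - beta b) = 1, the vector with entry
   omega^(a i + b j) at x^+_{i,j} and (l - beta b) omega^(b i + a j) at x^-_{i,j} is an eigenvector
   of T_m for l: the two cycle neighbours of a vertex contribute beta times its entry and the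
   matching edge x^+_{i,j} -- x^-_{j,i} the rest.  Each pair (a, b) yields two distinct roots, and
   the 2 m^2 vectors obtained form a basis, because orthogonality of the characters
   omega^(a i + b j) provides an explicit inverse matrix.  So the multiplicity of c is the number
   of pairs (a, b) with (c - beta a) (c - beta b) = 1, which for c = 1 is the cosine identity. *)

lemma Suc_mod_if: "j < m \<Longrightarrow> Suc j mod m = (if Suc j = m then 0 else Suc j)"
  by (simp add: mod_Suc)

lemma pred_mod_if:
  fixes j m :: nat
  assumes "j < m"
  shows "(j + m - 1) mod m = (if j = 0 then m - 1 else j - 1)"
proof (cases "j = 0")
  case False
  then have "j + m - 1 = (j - 1) + m"
    by arith
  then show ?thesis
    using False assms by (simp only: mod_add_self2) simp
qed (use assms in simp)

lemma Suc_mod_eq_iff: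
  assumes "j < m" "j' < m"
  shows "Suc j' mod m = j \<longleftrightarrow> j' = (j + m - 1) mod m"
  using assms unfolding Suc_mod_if[OF assms(2)] pred_mod_if[OF assms(1)] by auto

lemma Suc_mod_neq_pred_mod:
  assumes "m \<ge> 3" "j < m"
  shows "Suc j mod m \<noteq> (j + m - 1) mod m"
  using assms unfolding Suc_mod_if[OF assms(2)] pred_mod_if[OF assms(2)] by auto

lemma sum_lessThan_if_eq_three:
  fixes n :: nat
  assumes "x < n" "y < n" "z < n" "x \<noteq> y" "x \<noteq> z" "y \<noteq> z"
  shows "(\<Sum>u<n. if u = x \<or> u = y \<or> u = z then f u else 0) = f x + f y + f z"
proof -
  have "(\<Sum>u<n. if u = x \<or> u = y \<or> u = z then f u else 0) =
      sum f {u \<in> {..<n}. u = x \<or> u = y \<or> u = z}"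
    by (rule sum.inter_filter[symmetric]) simp
  also have "{u \<in> {..<n}. u = x \<or> u = y \<or> u = z} = {x, y, z}"
    using assms by auto
  finally show ?thesis
    using assms by (simp add: add.assoc)
qed

lemma card_lessThan_filter:
  fixes n :: nat
  shows "card {u. u < n \<and> P u} = (\<Sum>u<n. if P u then 1 else 0)"
proof -
  have "card {u. u < n \<and> P u} = card {u \<in> {..<n}. P u}"
    by (simp add: lessThan_def)
  also have "\<dots> = (\<Sum>u<n. if P u then 1 else 0)"
    unfolding card_eq_sum by (rule sum.inter_filter) simp
  finally show ?thesis .
qed

lemma card_pairs_lessThan_filter:
  fixes m :: nat
  shows "card {(a, b). a < m \<and> b < m \<and> P a b} = (\<Sum>a<m. \<Sum>b<m. if P a b then 1 else 0)"
proof -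
  have "{(a, b). a < m \<and> b < m \<and> P a b} = (SIGMA a:{..<m}. {b. b < m \<and> P a b})"
    by auto
  moreover have "card (SIGMA a:{..<m}. {b. b < m \<and> P a b}) = (\<Sum>a<m. card {b. b < m \<and> P a b})"
    by (rule card_SigmaI) auto
  ultimately have "card {(a, b). a < m \<and> b < m \<and> P a b} = (\<Sum>a<m. card {b. b < m \<and> P a b})"
    by simp
  then show ?thesis
    by (simp add: card_lessThan_filter)
qed

section \<open>Roots of unity\<close>

definition unit_root :: "nat \<Rightarrow> complex" where
  "unit_root m = cis (2 * pi / real m)"

lemma unit_root_pow: "unit_root m ^ k = cis (2 * pi * real k / real m)"
  by (simp add: unit_root_def DeMoivre field_simps)

lemma unit_root_pow_eq_1_iff:
  assumes "m > 0"
  shows "unit_root m ^ k = 1 \<longleftrightarrow> m dvd k"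
proof
  assume "unit_root m ^ k = 1"
  then have "cos (2 * pi * real k / real m) = 1"
    by (metis unit_root_pow cis.sel(1) one_complex.sel(1))
  then obtain t :: int where "2 * pi * real k / real m = t * 2 * pi"
    by (auto simp: cos_one_2pi_int)
  then have "int k = t * int m"
    using assms by (simp add: field_simps) (metis of_int_eq_iff of_int_mult of_int_of_nat_eq)
  then show "m dvd k"
    by (metis dvd_triv_right int_dvd_int_iff mult.commute)
next
  assume "m dvd k"
  then obtain q where "k = m * q" ..
  then have "2 * pi * real k / real m = 2 * pi * real q"
    using assms by simp
  then show "unit_root m ^ k = 1"
    by (simp add: unit_root_pow)
qed

lemma unit_root_pow_eq_iff:
  assumes "m > 0"
  shows "unit_root m ^ k = unit_root m ^ k' \<longleftrightarrow> k mod m = k' mod m"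
proof -
  have *: "unit_root m ^ k = unit_root m ^ k' \<longleftrightarrow> k mod m = k' mod m" if "k \<le> k'" for k k'
  proof -
    have "unit_root m ^ k' = unit_root m ^ k * unit_root m ^ (k' - k)"
      using that by (simp flip: power_add)
    moreover have "unit_root m ^ k \<noteq> 0"
      by (simp add: unit_root_pow)
    ultimately have "unit_root m ^ k = unit_root m ^ k' \<longleftrightarrow> unit_root m ^ (k' - k) = 1"
      by (metis mult_cancel_left1)
    also have "\<dots> \<longleftrightarrow> k mod m = k' mod m"
      using that unit_root_pow_eq_1_iff[OF assms] mod_eq_dvd_iff_nat by metis
    finally show ?thesis .
  qed
  show ?thesis
    using *[of k k'] *[of k' k] by (cases "k \<le> k'") auto
qed

lemma cnj_unit_root_pow: "cnj (unit_root m ^ k) = inverse (unit_root m ^ k)"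
  by (simp add: unit_root_pow cis_cnj)

lemma unit_root_pow_Suc_mod:
  assumes "m > 0"
  shows "unit_root m ^ (x + b * (Suc j mod m)) = unit_root m ^ (x + b * j) * unit_root m ^ b"
proof -
  have "(x + b * (Suc j mod m)) mod m = (x + b * Suc j) mod m"
    by (metis mod_add_right_eq mod_mult_right_eq)
  then have "(x + b * (Suc j mod m)) mod m = (x + b * j + b) mod m"
    by (simp add: algebra_simps)
  then show ?thesis
    by (simp add: unit_root_pow_eq_iff[OF assms] flip: power_add)
qed

lemma unit_root_pow_pred_mod:
  assumes "j < m"
  shows "unit_root m ^ (x + b * ((j + m - 1) mod m)) =
    unit_root m ^ (x + b * j) * cnj (unit_root m ^ b)"
proof -
  let ?j' = "(j + m - 1) mod m"
  have "Suc ?j' mod m = j"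
    using Suc_mod_eq_iff[OF assms, of ?j'] assms by simp
  then have "unit_root m ^ (x + b * j) = unit_root m ^ (x + b * ?j') * unit_root m ^ b"
    using unit_root_pow_Suc_mod[of m x b ?j'] assms by simp
  moreover have "unit_root m ^ b \<noteq> 0"
    by (simp add: unit_root_pow)
  ultimately show ?thesis
    unfolding cnj_unit_root_pow by (metis nonzero_mult_div_cancel_right divide_inverse)
qed

definition cycle_eigenvalue :: "nat \<Rightarrow> nat \<Rightarrow> real" where
  "cycle_eigenvalue m a = 2 * cos (2 * pi * real a / real m)"

lemma unit_root_pow_add_cnj:
  "unit_root m ^ k + cnj (unit_root m ^ k) = of_real (cycle_eigenvalue m k)"
  by (simp add: unit_root_pow cycle_eigenvalue_def complex_eq_iff)

lemma sum_cnj_unit_root_pow_mult: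
  assumes "a < m" "a' < m"
  shows "(\<Sum>i<m. cnj (unit_root m ^ (a * i)) * unit_root m ^ (a' * i)) =
    (if a = a' then of_nat m else 0)"
proof -
  have m: "m > 0"
    using assms by simp
  define z where "z = inverse (unit_root m ^ a) * unit_root m ^ a'"
  have z_pow: "cnj (unit_root m ^ (a * i)) * unit_root m ^ (a' * i) = z ^ i" for i
    unfolding cnj_unit_root_pow z_def by (simp only: power_mult power_mult_distrib power_inverse)
  have "unit_root m ^ a \<noteq> 0"
    by (simp add: unit_root_pow)
  then have z_eq_1: "z = 1 \<longleftrightarrow> a = a'"
    using assms by (auto simp: z_def unit_root_pow_eq_iff[OF m] field_simps)
  have "(\<Sum>i<m. cnj (unit_root m ^ (a * i)) * unit_root m ^ (a' * i)) = (\<Sum>i<m. z ^ i)"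
    by (simp only: z_pow)
  also have "\<dots> = (if a = a' then of_nat m else 0)"
  proof (cases "a = a'")
    case True
    then show ?thesis
      using z_eq_1 by simp
  next
    case False
    have "z ^ m = inverse ((unit_root m ^ m) ^ a) * (unit_root m ^ m) ^ a'"
      by (simp add: z_def power_mult_distrib power_inverse flip: power_mult)
        (simp add: mult.commute)
    then have "z ^ m = 1"
      using unit_root_pow_eq_1_iff[OF m, of m] by simp
    then show ?thesis
      using False z_eq_1 by (simp add: geometric_sum)
  qed
  finally show ?thesis .
qed

section \<open>The solutions of (x - A) (x - B) = 1\<close>

definition upper_root :: "real \<Rightarrow> real \<Rightarrow> real" where
  "upper_root A B = (A + B + sqrt ((A - B)\<^sup>2 + 4)) / 2"

definition lower_root :: "real \<Rightarrow> real \<Rightarrow> real" where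
  "lower_root A B = (A + B - sqrt ((A - B)\<^sup>2 + 4)) / 2"

lemma shifted_product_factorization:
  "(x - A) * (x - B) - 1 = (x - upper_root A B) * (x - lower_root A B)"
proof -
  have "(sqrt ((A - B)\<^sup>2 + 4))\<^sup>2 = (A - B)\<^sup>2 + 4"
    by (simp add: add_nonneg_pos)
  then show ?thesis
    unfolding upper_root_def lower_root_def by (simp add: field_simps power2_eq_square)
qed

lemma lower_root_less_upper_root: "lower_root A B < upper_root A B"
  unfolding upper_root_def lower_root_def by (simp add: add_nonneg_pos)

lemma eq_upper_or_lower_root_iff:
  "x = upper_root A B \<or> x = lower_root A B \<longleftrightarrow> (x - A) * (x - B) = 1"
  using shifted_product_factorization[of x A B] by auto

lemma count_upper_lower_root:
  "(if upper_root A B = x then 1 else 0) + (if lower_root A B = x then 1 else 0) =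
    (if (x - A) * (x - B) = 1 then 1 else (0 :: nat))"
  using lower_root_less_upper_root[of A B] eq_upper_or_lower_root_iff[of x A B] by auto

section \<open>Characteristic polynomials from an eigenbasis\<close>

lemma char_poly_eq_prod_eigenvalues:
  fixes A P Q :: "'a :: field mat"
  assumes A: "A \<in> carrier_mat n n" and P: "P \<in> carrier_mat n n" and Q: "Q \<in> carrier_mat n n"
    and QP: "Q * P = 1\<^sub>m n" and AP: "A * P = P * mat_diag n e"
  shows "char_poly A = (\<Prod>u\<leftarrow>[0..<n]. [:- e u, 1:])"
proof -
  have PQ: "P * Q = 1\<^sub>m n"
    by (rule mat_mult_left_right_inverse[OF Q P QP])
  have "A = A * P * Q"
    using A P Q by (simp add: assoc_mult_mat[of A n n P n Q n] PQ)
  also have "\<dots> = P * mat_diag n e * Q"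
    by (simp add: AP)
  finally have "similar_mat A (mat_diag n e)"
    using A P Q PQ QP by (intro similar_matI[of _ _ P Q n]) auto
  then have "char_poly A = char_poly (mat_diag n e)"
    by (rule char_poly_similar)
  also have "\<dots> = (\<Prod>a\<leftarrow>diag_mat (mat_diag n e). [:- a, 1:])"
    by (rule char_poly_upper_triangular[of _ n]) (auto simp: upper_triangular_def mat_diag_def)
  also have "diag_mat (mat_diag n e) = map e [0..<n]"
    by (simp add: diag_mat_def mat_diag_def)
  finally show ?thesis
    by (simp add: o_def)
qed

lemma order_prod_linear_factors:
  fixes e :: "nat \<Rightarrow> 'a :: idom"
  shows "order c (\<Prod>u\<leftarrow>[0..<n]. [:- e u, 1:]) = card {u. u < n \<and> e u = c}"
proof -
  have "order c (\<Prod>u\<leftarrow>[0..<n]. [:- e u, 1:]) = (\<Sum>u\<leftarrow>[0..<n]. if e u = c then 1 else 0)"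
    by (subst order_prod_list) (auto simp: o_def order_linear')
  also have "\<dots> = card {u. u < n \<and> e u = c}"
    by (simp add: card_lessThan_filter atLeast0LessThan flip: sum_set_upt_conv_sum_list_nat)
  finally show ?thesis .
qed

section \<open>Vertices and adjacency of T_m\<close>

definition vertex_fst :: "nat \<Rightarrow> nat \<Rightarrow> nat" where
  "vertex_fst m v = v div m mod m"

definition vertex_snd :: "nat \<Rightarrow> nat \<Rightarrow> nat" where
  "vertex_snd m v = v mod m"

lemma Tn_eq_Tp: "Tn m i j = m * m + Tp m i j"
  by (simp add: Tn_def Tp_def)

lemma Tp_less:
  assumes "i < m" "j < m"
  shows "Tp m i j < m * m"
proof -
  have "i * m + j < (i + 1) * m"
    using assms by simp
  also have "\<dots> \<le> m * m"
    using assms by (intro mult_right_mono) auto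
  finally show ?thesis
    by (simp add: Tp_def)
qed

lemma Tn_less: "i < m \<Longrightarrow> j < m \<Longrightarrow> Tn m i j < 2 * m * m"
  using Tp_less[of i m j] by (simp add: Tn_eq_Tp)

lemma Tn_not_less [simp]: "\<not> Tn m i j < m * m"
  by (simp add: Tn_eq_Tp)

lemma vertex_fst_Tp [simp]: "i < m \<Longrightarrow> j < m \<Longrightarrow> vertex_fst m (Tp m i j) = i"
  by (simp add: vertex_fst_def Tp_def)

lemma vertex_snd_Tp [simp]: "j < m \<Longrightarrow> vertex_snd m (Tp m i j) = j"
  by (simp add: vertex_snd_def Tp_def)

lemma vertex_fst_Tn [simp]: "i < m \<Longrightarrow> j < m \<Longrightarrow> vertex_fst m (Tn m i j) = i"
  by (simp add: vertex_fst_def Tn_def add.assoc)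

lemma vertex_snd_Tn [simp]: "j < m \<Longrightarrow> vertex_snd m (Tn m i j) = j"
  by (simp add: vertex_snd_def Tn_def add.assoc)

lemma vertex_fst_less: "m > 0 \<Longrightarrow> vertex_fst m v < m"
  by (simp add: vertex_fst_def)

lemma vertex_snd_less: "m > 0 \<Longrightarrow> vertex_snd m v < m"
  by (simp add: vertex_snd_def)

lemma Tp_eq_Tp_iff [simp]:
  "i < m \<Longrightarrow> j < m \<Longrightarrow> i' < m \<Longrightarrow> j' < m \<Longrightarrow> Tp m i j = Tp m i' j' \<longleftrightarrow> i = i' \<and> j = j'"
  by (metis vertex_fst_Tp vertex_snd_Tp)

lemma Tn_eq_Tn_iff [simp]:
  "i < m \<Longrightarrow> j < m \<Longrightarrow> i' < m \<Longrightarrow> j' < m \<Longrightarrow> Tn m i j = Tn m i' j' \<longleftrightarrow> i = i' \<and> j = j'"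
  by (metis vertex_fst_Tn vertex_snd_Tn)

lemma Tp_neq_Tn [simp]: "i < m \<Longrightarrow> j < m \<Longrightarrow> Tp m i j \<noteq> Tn m i' j'"
  using Tp_less[of i m j] by (simp add: Tn_eq_Tp)

lemma Tn_neq_Tp [simp]: "i < m \<Longrightarrow> j < m \<Longrightarrow> Tn m i' j' \<noteq> Tp m i j"
  using Tp_neq_Tn by metis

lemma vertex_cases:
  assumes "v < 2 * m * m"
  obtains i j where "i < m" "j < m" "v = Tp m i j"
    | i j where "i < m" "j < m" "v = Tn m i j"
proof (cases "v < m * m")
  case True
  then have "m > 0"
    by (cases m) auto
  with True have "v div m < m" "v mod m < m"
    by (auto simp: less_mult_imp_div_less)
  moreover have "v = Tp m (v div m) (v mod m)"
    by (simp add: Tp_def)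
  ultimately show ?thesis
    using that(1) by blast
next
  case False
  then have "v - m * m < m * m"
    using assms by simp
  moreover from this have "m > 0"
    by (cases m) auto
  ultimately have "(v - m * m) div m < m" "(v - m * m) mod m < m"
    by (auto simp: less_mult_imp_div_less)
  moreover have "v = Tn m ((v - m * m) div m) ((v - m * m) mod m)"
    using False by (simp add: Tn_def)
  ultimately show ?thesis
    using that(2) by blast
qed

lemma vertex_eq_iff:
  assumes "u < 2 * m * m" "u' < 2 * m * m"
  shows "u = u' \<longleftrightarrow>
    vertex_fst m u = vertex_fst m u' \<and> vertex_snd m u = vertex_snd m u' \<and> (u < m * m \<longleftrightarrow> u' < m * m)"
  using assms(1) by (cases rule: vertex_cases; use assms(2) in \<open>cases rule: vertex_cases\<close>)
    (auto simp: Tp_less)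

lemma sum_vertices:
  "(\<Sum>v<2 * m * m. f v) = (\<Sum>i<m. \<Sum>j<m. f (Tp m i j)) + (\<Sum>i<m. \<Sum>j<m. f (Tn m i j))"
proof -
  have block: "sum g {i * m..<i * m + m} = (\<Sum>j<m. g (i * m + j))" for g :: "nat \<Rightarrow> 'a" and i
    using sum.shift_bounds_nat_ivl[of g 0 "i * m" m] by (simp add: atLeast0LessThan add.commute)
  have rows: "(\<Sum>v<m * m. g v) = (\<Sum>i<m. \<Sum>j<m. g (Tp m i j))" for g :: "nat \<Rightarrow> 'a"
    by (simp add: Tp_def block flip: sum.nat_group)
  have two: "2 * m * m = m * m + m * m"
    by simp
  have "(\<Sum>v<2 * m * m. f v) = (\<Sum>v<m * m. f v) + (\<Sum>v<m * m. f (m * m + v))"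
    unfolding two using sum.atLeastLessThan_concat[of 0 "m * m" "m * m + m * m" f]
      sum.shift_bounds_nat_ivl[of f 0 "m * m" "m * m"]
    by (simp add: atLeast0LessThan add.commute)
  then show ?thesis
    by (simp add: rows Tn_eq_Tp)
qed

lemma T_edge_from_Tp:
  assumes "i < m" "j < m"
  shows "T_edge m (Tp m i j) u \<longleftrightarrow> u = Tp m i (Suc j mod m) \<or> u = Tn m j i"
  using assms unfolding T_edge_def by auto

lemma T_edge_to_Tp:
  assumes "i < m" "j < m"
  shows "T_edge m u (Tp m i j) \<longleftrightarrow> u = Tp m i ((j + m - 1) mod m)"
proof -
  have "T_edge m u (Tp m i j) \<longleftrightarrow> (\<exists>j'<m. Suc j' mod m = j \<and> u = Tp m i j')"
    using assms unfolding T_edge_def by auto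
  also have "\<dots> \<longleftrightarrow> u = Tp m i ((j + m - 1) mod m)"
    using Suc_mod_eq_iff[OF assms(2)] assms(2) by (metis mod_less_divisor gr_zeroI not_less0)
  finally show ?thesis .
qed

lemma T_edge_from_Tn:
  assumes "i < m" "j < m"
  shows "T_edge m (Tn m i j) u \<longleftrightarrow> u = Tn m i (Suc j mod m)"
  using assms unfolding T_edge_def by auto

lemma T_edge_to_Tn:
  assumes "i < m" "j < m"
  shows "T_edge m u (Tn m i j) \<longleftrightarrow> u = Tn m i ((j + m - 1) mod m) \<or> u = Tp m j i"
proof -
  have "T_edge m u (Tn m i j) \<longleftrightarrow> (\<exists>j'<m. Suc j' mod m = j \<and> u = Tn m i j') \<or> u = Tp m j i"
    using assms unfolding T_edge_def by auto
  also have "\<dots> \<longleftrightarrow> u = Tn m i ((j + m - 1) mod m) \<or> u = Tp m j i"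
    using Suc_mod_eq_iff[OF assms(2)] assms(2) by (metis mod_less_divisor gr_zeroI not_less0)
  finally show ?thesis .
qed

lemma T_adj_Tp:
  assumes "i < m" "j < m"
  shows "T_adj m (Tp m i j) u \<longleftrightarrow>
    u = Tp m i (Suc j mod m) \<or> u = Tp m i ((j + m - 1) mod m) \<or> u = Tn m j i"
  unfolding T_adj_def T_edge_from_Tp[OF assms] T_edge_to_Tp[OF assms] by auto

lemma T_adj_Tn:
  assumes "i < m" "j < m"
  shows "T_adj m (Tn m i j) u \<longleftrightarrow>
    u = Tn m i (Suc j mod m) \<or> u = Tn m i ((j + m - 1) mod m) \<or> u = Tp m j i"
  unfolding T_adj_def T_edge_from_Tn[OF assms] T_edge_to_Tn[OF assms] by auto

lemma sum_adjacent_Tp: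
  assumes "m \<ge> 3" "i < m" "j < m"
  shows "(\<Sum>u<2 * m * m. if T_adj m (Tp m i j) u then f u else 0) =
    f (Tp m i (Suc j mod m)) + f (Tp m i ((j + m - 1) mod m)) + f (Tn m j i)"
proof -
  have "Suc j mod m < m" "(j + m - 1) mod m < m"
    using assms by auto
  then show ?thesis
    unfolding T_adj_Tp[OF assms(2,3)]
    using assms Suc_mod_neq_pred_mod[OF assms(1,3)] Tn_less[of j m i]
      Tp_less[of i m "Suc j mod m"] Tp_less[of i m "(j + m - 1) mod m"]
    by (intro sum_lessThan_if_eq_three) auto
qed

lemma sum_adjacent_Tn:
  assumes "m \<ge> 3" "i < m" "j < m"
  shows "(\<Sum>u<2 * m * m. if T_adj m (Tn m i j) u then f u else 0) =
    f (Tn m i (Suc j mod m)) + f (Tn m i ((j + m - 1) mod m)) + f (Tp m j i)"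
proof -
  have "Suc j mod m < m" "(j + m - 1) mod m < m"
    using assms by auto
  then show ?thesis
    unfolding T_adj_Tn[OF assms(2,3)]
    using assms Suc_mod_neq_pred_mod[OF assms(1,3)] Tp_less[of j m i]
      Tn_less[of i m "Suc j mod m"] Tn_less[of i m "(j + m - 1) mod m"]
    by (intro sum_lessThan_if_eq_three) auto
qed

section \<open>Eigenvectors\<close>

definition character :: "nat \<Rightarrow> nat \<Rightarrow> nat \<Rightarrow> nat \<Rightarrow> complex" where
  "character m a b v = unit_root m ^
    (if v < m * m then a * vertex_fst m v + b * vertex_snd m v
     else b * vertex_fst m v + a * vertex_snd m v)"

lemma character_Tp [simp]:
  "i < m \<Longrightarrow> j < m \<Longrightarrow> character m a b (Tp m i j) = unit_root m ^ (a * i + b * j)"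
  by (simp add: character_def Tp_less)

lemma character_Tn [simp]:
  "i < m \<Longrightarrow> j < m \<Longrightarrow> character m a b (Tn m i j) = unit_root m ^ (b * i + a * j)"
  by (simp add: character_def)

definition eigvec :: "nat \<Rightarrow> nat \<Rightarrow> nat \<Rightarrow> real \<Rightarrow> nat \<Rightarrow> complex" where
  "eigvec m a b l v =
    (if v < m * m then 1 else of_real (l - cycle_eigenvalue m b)) * character m a b v"

lemma eigvec_Tp [simp]:
  "i < m \<Longrightarrow> j < m \<Longrightarrow> eigvec m a b l (Tp m i j) = unit_root m ^ (a * i + b * j)"
  by (simp add: eigvec_def Tp_less)

lemma eigvec_Tn [simp]:
  "i < m \<Longrightarrow> j < m \<Longrightarrow>
    eigvec m a b l (Tn m i j) = of_real (l - cycle_eigenvalue m b) * unit_root m ^ (b * i + a * j)"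
  by (simp add: eigvec_def)

lemma sum_adjacent_eigvec:
  assumes m: "m \<ge> 3" and "a < m" "b < m" "v < 2 * m * m"
    and root: "(l - cycle_eigenvalue m a) * (l - cycle_eigenvalue m b) = 1"
  shows "(\<Sum>u<2 * m * m. if T_adj m v u then eigvec m a b l u else 0) = of_real l * eigvec m a b l v"
proof -
  have m0: "m > 0"
    using m by simp
  let ?c = "of_real (l - cycle_eigenvalue m b) :: complex"
  from \<open>v < 2 * m * m\<close> show ?thesis
  proof (cases rule: vertex_cases)
    case (1 i j)
    let ?x = "unit_root m ^ (a * i + b * j)"
    have "Suc j mod m < m" "(j + m - 1) mod m < m"
      using 1 by auto
    then have "eigvec m a b l (Tp m i (Suc j mod m)) = ?x * unit_root m ^ b"
      "eigvec m a b l (Tp m i ((j + m - 1) mod m)) = ?x * cnj (unit_root m ^ b)"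
      "eigvec m a b l (Tn m j i) = ?c * ?x"
      using 1 by (simp_all only: eigvec_Tp eigvec_Tn unit_root_pow_Suc_mod[OF m0]
          unit_root_pow_pred_mod add.commute)
    then have "(\<Sum>u<2 * m * m. if T_adj m v u then eigvec m a b l u else 0) =
        ?x * (unit_root m ^ b + cnj (unit_root m ^ b)) + ?c * ?x"
      unfolding 1(3) sum_adjacent_Tp[OF m 1(1,2)] by (simp only: distrib_left)
    also have "\<dots> = of_real l * ?x"
      unfolding unit_root_pow_add_cnj by (simp add: algebra_simps)
    finally show ?thesis
      using 1 by simp
  next
    case (2 i j)
    let ?y = "unit_root m ^ (b * i + a * j)"
    have "Suc j mod m < m" "(j + m - 1) mod m < m"
      using 2 by auto
    then have "eigvec m a b l (Tn m i (Suc j mod m)) = ?c * (?y * unit_root m ^ a)"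
      "eigvec m a b l (Tn m i ((j + m - 1) mod m)) = ?c * (?y * cnj (unit_root m ^ a))"
      "eigvec m a b l (Tp m j i) = ?y"
      using 2 by (simp_all only: eigvec_Tp eigvec_Tn unit_root_pow_Suc_mod[OF m0]
          unit_root_pow_pred_mod add.commute)
    then have "(\<Sum>u<2 * m * m. if T_adj m v u then eigvec m a b l u else 0) =
        ?c * ?y * (unit_root m ^ a + cnj (unit_root m ^ a)) + ?y"
      unfolding 2(3) sum_adjacent_Tn[OF m 2(1,2)] by (simp only: distrib_left mult.assoc)
    also have "\<dots> = of_real ((l - cycle_eigenvalue m b) * cycle_eigenvalue m a + 1) * ?y"
      unfolding unit_root_pow_add_cnj by (simp add: algebra_simps)
    also have "(l - cycle_eigenvalue m b) * cycle_eigenvalue m a + 1 =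
        l * (l - cycle_eigenvalue m b)"
      using root by (simp add: algebra_simps)
    finally show ?thesis
      using 2 by (simp add: mult.assoc)
  qed
qed

lemma sum_cnj_character_mult:
  assumes "a < m" "b < m" "a' < m" "b' < m"
  shows "(\<Sum>v<2 * m * m.
      (if v < m * m then p else q) * (cnj (character m a b v) * character m a' b' v)) =
    (if a = a' \<and> b = b' then of_nat (m * m) * (p + q) else 0)"
proof -
  define F where "F c c' i = cnj (unit_root m ^ (c * i)) * unit_root m ^ (c' * i)" for c c' i
  have factor: "cnj (unit_root m ^ (c * i + d * j)) * unit_root m ^ (c' * i + d' * j) =
      F c c' i * F d d' j" for c d c' d' i j
    by (simp only: F_def power_add complex_cnj_mult mult_ac)
  have orth: "(\<Sum>i<m. F c c' i) = (if c = c' then of_nat m else 0)" if "c < m" "c' < m" for c c'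
    unfolding F_def by (rule sum_cnj_unit_root_pow_mult[OF that])
  have "(\<Sum>v<2 * m * m.
        (if v < m * m then p else q) * (cnj (character m a b v) * character m a' b' v)) =
      (\<Sum>i<m. \<Sum>j<m. p * (F a a' i * F b b' j)) + (\<Sum>i<m. \<Sum>j<m. q * (F b b' i * F a a' j))"
    by (simp add: sum_vertices Tp_less factor del: complex_cnj_power)
  also have "\<dots> = p * ((\<Sum>i<m. F a a' i) * (\<Sum>j<m. F b b' j)) +
      q * ((\<Sum>i<m. F b b' i) * (\<Sum>j<m. F a a' j))"
    unfolding sum_product by (simp only: sum_distrib_left)
  also have "\<dots> = (if a = a' \<and> b = b' then of_nat (m * m) * (p + q) else 0)"
    using assms by (simp add: orth algebra_simps)
  finally show ?thesis .
qed

section \<open>An eigenbasis of T_m\<close>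

text \<open>Eigenbasis columns are indexed like vertices: column u belongs to the coordinates (a, b) of u
  and takes the upper root on the x^+ half of the indices, the lower root on the x^- half.\<close>

definition eigval :: "nat \<Rightarrow> nat \<Rightarrow> real" where
  "eigval m u = (if u < m * m then upper_root else lower_root)
    (cycle_eigenvalue m (vertex_fst m u)) (cycle_eigenvalue m (vertex_snd m u))"

definition eigval_other :: "nat \<Rightarrow> nat \<Rightarrow> real" where
  "eigval_other m u = (if u < m * m then lower_root else upper_root)
    (cycle_eigenvalue m (vertex_fst m u)) (cycle_eigenvalue m (vertex_snd m u))"

lemma eigval_root:
  "(eigval m u - cycle_eigenvalue m (vertex_fst m u)) *
    (eigval m u - cycle_eigenvalue m (vertex_snd m u)) = 1"
  by (simp add: eigval_def flip: eq_upper_or_lower_root_iff)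

lemma eigval_neq_other: "eigval m u \<noteq> eigval_other m u"
  using lower_root_less_upper_root by (simp add: eigval_def eigval_other_def) (metis less_irrefl)

lemma eigval_eq_eigval_other:
  assumes "u < 2 * m * m" "u' < 2 * m * m" "u \<noteq> u'"
    and "vertex_fst m u = vertex_fst m u'" "vertex_snd m u = vertex_snd m u'"
  shows "eigval m u' = eigval_other m u"
  using assms vertex_eq_iff[OF assms(1,2)] by (auto simp: eigval_def eigval_other_def)

definition eigvec_mat :: "nat \<Rightarrow> complex mat" where
  "eigvec_mat m = mat (2 * m * m) (2 * m * m)
    (\<lambda>(v, u). eigvec m (vertex_fst m u) (vertex_snd m u) (eigval m u) v)"

text \<open>By orthogonality of the characters, the (u, u') entry of dual_mat m * eigvec_mat m vanishes
  unless u and u' have the same coordinates, and then equals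
  (eigval m u' - eigval_other m u) / (eigval m u - eigval_other m u).\<close>

definition dual_mat :: "nat \<Rightarrow> complex mat" where
  "dual_mat m = mat (2 * m * m) (2 * m * m) (\<lambda>(u, v).
    of_real ((if v < m * m then cycle_eigenvalue m (vertex_snd m u) - eigval_other m u else 1) /
      (real (m * m) * (eigval m u - eigval_other m u))) *
    cnj (character m (vertex_fst m u) (vertex_snd m u) v))"

lemma dual_mat_mult_eigvec_mat:
  assumes "m > 0"
  shows "dual_mat m * eigvec_mat m = 1\<^sub>m (2 * m * m)"
proof (rule eq_matI)
  fix u u'
  assume "u < dim_row (1\<^sub>m (2 * m * m) :: complex mat)"
    and "u' < dim_col (1\<^sub>m (2 * m * m) :: complex mat)"
  then have u: "u < 2 * m * m" and u': "u' < 2 * m * m"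
    by simp_all
  let ?a = "vertex_fst m u" and ?b = "vertex_snd m u"
  let ?a' = "vertex_fst m u'" and ?b' = "vertex_snd m u'"
  let ?D = "real (m * m) * (eigval m u - eigval_other m u)"
  let ?x = "(cycle_eigenvalue m ?b - eigval_other m u) / ?D"
  let ?y = "(eigval m u' - cycle_eigenvalue m ?b') / ?D"
  have "(dual_mat m * eigvec_mat m) $$ (u, u') =
      (\<Sum>v<2 * m * m. (if v < m * m then of_real ?x else of_real ?y) *
        (cnj (character m ?a ?b v) * character m ?a' ?b' v))"
    using u u' by (auto simp: dual_mat_def eigvec_mat_def eigvec_def scalar_prod_def
        atLeast0LessThan intro!: sum.cong)
  also have "\<dots> = (if ?a = ?a' \<and> ?b = ?b' then of_nat (m * m) * (of_real ?x + of_real ?y) else 0)"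
    using assms by (intro sum_cnj_character_mult) (simp_all add: vertex_fst_less vertex_snd_less)
  also have "\<dots> = 1\<^sub>m (2 * m * m) $$ (u, u')"
  proof (cases "?a = ?a' \<and> ?b = ?b'")
    case True
    have d: "eigval m u - eigval_other m u \<noteq> 0"
      using eigval_neq_other[of m u] by simp
    have "?x + ?y = (eigval m u' - eigval_other m u) / ?D"
      using True by (simp add: add_divide_distrib[symmetric])
    also have "eigval m u' - eigval_other m u =
        (if u = u' then eigval m u - eigval_other m u else 0)"
      using True eigval_eq_eigval_other[OF u u'] by auto
    finally have "?x + ?y = (if u = u' then eigval m u - eigval_other m u else 0) / ?D" .
    then have "real (m * m) * (?x + ?y) = (if u = u' then 1 else 0)"
      using assms d by (cases "u = u'") simp_all
    moreover have "of_nat (m * m) * (of_real ?x + of_real ?y) =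
        (of_real (real (m * m) * (?x + ?y)) :: complex)"
      by simp
    ultimately have "of_nat (m * m) * (of_real ?x + of_real ?y) =
        (if u = u' then 1 else (0 :: complex))"
      by simp
    then show ?thesis
      using True u u' by simp
  next
    case False
    then show ?thesis
      using u u' by auto
  qed
  finally show "(dual_mat m * eigvec_mat m) $$ (u, u') = 1\<^sub>m (2 * m * m) $$ (u, u')" .
qed (simp_all add: dual_mat_def eigvec_mat_def)

lemma adjacency_mult_eigvec_mat:
  assumes "m \<ge> 3"
  shows "map_mat of_real (T_adjacency_matrix m) * eigvec_mat m =
    eigvec_mat m * mat_diag (2 * m * m) (\<lambda>u. of_real (eigval m u))"
proof -
  have m0: "m > 0"
    using assms by simp
  have "(map_mat of_real (T_adjacency_matrix m) * eigvec_mat m) $$ (v, u) =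
      eigvec_mat m $$ (v, u) * of_real (eigval m u)"
    if v: "v < 2 * m * m" and u: "u < 2 * m * m" for v u
  proof -
    have "(map_mat of_real (T_adjacency_matrix m) * eigvec_mat m) $$ (v, u) =
        (\<Sum>k<2 * m * m.
          if T_adj m v k then eigvec m (vertex_fst m u) (vertex_snd m u) (eigval m u) k else 0)"
      using v u by (auto simp: T_adjacency_matrix_def eigvec_mat_def scalar_prod_def
          atLeast0LessThan intro!: sum.cong)
    also have "\<dots> = of_real (eigval m u) * eigvec m (vertex_fst m u) (vertex_snd m u) (eigval m u) v"
      using m0 by (intro sum_adjacent_eigvec[OF assms _ _ v eigval_root])
        (simp_all add: vertex_fst_less vertex_snd_less)
    finally show ?thesis
      using v u by (simp add: eigvec_mat_def)
  qed
  then show ?thesis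
    by (subst mat_diag_mult_right[of _ "2 * m * m"])
      (auto simp: eigvec_mat_def T_adjacency_matrix_def)
qed

lemma eigenvalue_multiplicity_T_adjacency_matrix:
  assumes "m \<ge> 3"
  shows "eigenvalue_multiplicity (T_adjacency_matrix m) c =
    card {u. u < 2 * m * m \<and> eigval m u = c}"
proof -
  interpret of_real_poly: map_poly_inj_idom_divide_hom "of_real :: real \<Rightarrow> complex"
    by unfold_locales (simp_all add: of_real_divide)
  have A: "T_adjacency_matrix m \<in> carrier_mat (2 * m * m) (2 * m * m)"
    by (simp add: T_adjacency_matrix_def)
  have "eigenvalue_multiplicity (T_adjacency_matrix m) c =
      order (of_real c) (map_poly of_real (char_poly (T_adjacency_matrix m)) :: complex poly)"
    by (simp add: eigenvalue_multiplicity_def of_real_poly.order_hom)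
  also have "map_poly of_real (char_poly (T_adjacency_matrix m)) =
      char_poly (map_mat of_real (T_adjacency_matrix m) :: complex mat)"
    by (rule of_real_hom.char_poly_hom[OF A, symmetric])
  also have "\<dots> = (\<Prod>u\<leftarrow>[0..<2 * m * m]. [:- of_real (eigval m u), 1:])"
    using assms A
    by (intro char_poly_eq_prod_eigenvalues[OF _ _ _
          dual_mat_mult_eigvec_mat adjacency_mult_eigvec_mat])
      (auto simp: eigvec_mat_def dual_mat_def)
  also have "order (of_real c) \<dots> =
      card {u. u < 2 * m * m \<and> of_real (eigval m u) = (of_real c :: complex)}"
    by (rule order_prod_linear_factors)
  finally show ?thesis
    by simp
qed

lemma card_eigval_eq:
  "card {u. u < 2 * m * m \<and> eigval m u = c} =
    card {(a, b). a < m \<and> b < m \<and> (c - cycle_eigenvalue m a) * (c - cycle_eigenvalue m b) = 1}"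
proof -
  let ?up = "\<lambda>a b. upper_root (cycle_eigenvalue m a) (cycle_eigenvalue m b)"
  let ?lo = "\<lambda>a b. lower_root (cycle_eigenvalue m a) (cycle_eigenvalue m b)"
  have "card {u. u < 2 * m * m \<and> eigval m u = c} = (\<Sum>u<2 * m * m. if eigval m u = c then 1 else 0)"
    by (rule card_lessThan_filter)
  also have "\<dots> = (\<Sum>a<m. \<Sum>b<m. (if ?up a b = c then 1 else 0) + (if ?lo a b = c then 1 else 0))"
    by (simp add: sum_vertices eigval_def Tp_less sum.distrib)
  also have "\<dots> = (\<Sum>a<m. \<Sum>b<m.
      if (c - cycle_eigenvalue m a) * (c - cycle_eigenvalue m b) = 1 then 1 else 0)"
    by (simp only: count_upper_lower_root)
  also have "\<dots> =
      card {(a, b). a < m \<and> b < m \<and> (c - cycle_eigenvalue m a) * (c - cycle_eigenvalue m b) = 1}"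
    by (rule card_pairs_lessThan_filter[symmetric])
  finally show ?thesis .
qed

theorem corollary6p10:
  fixes m :: nat
  assumes "m \<ge> 3"
  shows "eigenvalue_multiplicity (T_adjacency_matrix m) 1 =
    card {(j, l). j < m \<and> l < m \<and>
      cos (2 * pi * real j / real m) + cos (2 * pi * real l / real m) =
      2 * cos (2 * pi * real j / real m) * cos (2 * pi * real l / real m)}"
proof -
  have iff: "(1 - 2 * x) * (1 - 2 * y) = 1 \<longleftrightarrow> x + y = 2 * x * y" for x y :: real
    by (auto simp: algebra_simps)
  have "eigenvalue_multiplicity (T_adjacency_matrix m) 1 =
      card {(a, b). a < m \<and> b < m \<and> (1 - cycle_eigenvalue m a) * (1 - cycle_eigenvalue m b) = 1}"
    unfolding eigenvalue_multiplicity_T_adjacency_matrix[OF assms] by (rule card_eigval_eq)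
  then show ?thesis
    by (simp add: cycle_eigenvalue_def iff)
qed

end
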